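(* Let $A$ be a pro-$C^*$-algebra, $H$ a Hilbert space, and let $\rho=[\rho_{ij}]_{i,j=1}^n$ and $\theta=[\theta_{ij}]_{i,j=1}^n$ be completely $n$-positive linear maps from $A$ to $L(H)$ with Stinespring representations $(\Phi_\rho,H_\rho,V_{\rho,1},\dots,V_{\rho,n})$ and $(\Phi_\theta,H_\theta,V_{\theta,1},\dots,V_{\theta,n})$. If $\theta\le\rho$, then there is $W\in L(H_\rho,H_\theta)$ such that (1) $\|W\|\le1$; (2) $WV_{\rho,i}=V_{\theta,i}$ for all $i\in\{1,\dots,n\}$; (3) $W\Phi_\rho(a)=\Phi_\theta(a)W$ for all $a\in A$.
   Context: A pro-$C^*$-algebra is a complete Hausdorff topological $*$-algebra over $\mathbb{C}$ whose topology is determined by its continuous $C^*$-seminorms. A representation of $A$ on a Hilbert space $K$ is a continuous $*$-morphism $A\to L(K)$. An $n\times n$ matrix $[\rho_{ij}]$ of continuous linear maps $A\to L(H)$ is completely $n$-positive if the map $M_n(A)\to M_n(L(H))$, $[a_{ij}]\mapsto[\rho_{ij}(a_{ij})]$, is completely positive; $\theta\le\rho$ means $\rho-\theta$ is completely $n$-positive. The Stinespring representation of $\rho$ consists of a representation $\Phi_\rho$ of $A$ on a Hilbert space $H_\rho$ and $V_{\rho,1},\dots,V_{\rho,n}\in L(H,H_\rho)$ with $\rho_{ij}(a)=V_{\rho,i}^*\Phi_\rho(a)V_{\rho,j}$ for all $a,i,j$ and $\{\Phi_\rho(a)V_{\rho,i}\xi:a\in A,\xi\in H,1\le i\le n\}$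 spanning a dense subspace of $H_\rho$; it exists and is unique up to unitary equivalence. *)

theory Defs
  imports "HOL-Analysis.Analysis" "HOL-Library.Complex_Order"
begin

class complex_vector = ab_group_add +
  fixes scaleC :: "complex \<Rightarrow> 'a \<Rightarrow> 'a" (infixr \<open>*\<^sub>C\<close> 75)
  assumes scaleC_add_right: "a *\<^sub>C (x + y) = a *\<^sub>C x + a *\<^sub>C y"
    and scaleC_add_left: "(a + b) *\<^sub>C x = a *\<^sub>C x + b *\<^sub>C x"
    and scaleC_scaleC: "a *\<^sub>C (b *\<^sub>C x) = (a * b) *\<^sub>C x"
    and scaleC_one: "1 *\<^sub>C x = x"

text \<open>Complex inner product space; the inner product is conjugate-linear in the
first and linear in the second argument.\<close>
class complex_inner = complex_vector + real_normed_vector +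
  fixes cinner :: "'a \<Rightarrow> 'a \<Rightarrow> complex"
  assumes scaleR_scaleC: "scaleR r x = complex_of_real r *\<^sub>C x"
    and cinner_commute: "cinner x y = cnj (cinner y x)"
    and cinner_add_right: "cinner x (y + z) = cinner x y + cinner x z"
    and cinner_scaleC_right: "cinner x (c *\<^sub>C y) = c * cinner x y"
    and cinner_ge_zero: "0 \<le> cinner x x"
    and norm_eq_sqrt_cinner: "norm x = sqrt (Re (cinner x x))"

class chilbert_space = complex_inner + complete_space

definition bounded_clinear :: "('a::complex_inner \<Rightarrow> 'b::complex_inner) \<Rightarrow> bool" where
  "bounded_clinear f \<longleftrightarrow>
     (\<forall>x y. f (x + y) = f x + f y) \<and> (\<forall>c x. f (c *\<^sub>C x) = c *\<^sub>C f x) \<and>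
     (\<exists>K. \<forall>x. norm (f x) \<le> norm x * K)"

definition cadjoint :: "('a::complex_inner \<Rightarrow> 'b::complex_inner) \<Rightarrow> 'b \<Rightarrow> 'a" where
  "cadjoint T = (SOME S. \<forall>x y. cinner (S y) x = cinner y (T x))"

definition cspan :: "'a::complex_vector set \<Rightarrow> 'a set" where
  "cspan S = {\<Sum>x\<in>F. c x *\<^sub>C x | F c. finite F \<and> F \<subseteq> S}"

class complex_algebra = complex_vector + ring +
  assumes mult_scaleC_left: "(a *\<^sub>C x) * y = a *\<^sub>C (x * y)"
    and mult_scaleC_right: "x * (a *\<^sub>C y) = a *\<^sub>C (x * y)"

class star_algebra = complex_algebra +
  fixes invol :: "'a \<Rightarrow> 'a"
  assumes invol_invol: "invol (invol x) = x"
    and invol_add: "invol (x + y) = invol x + invol y"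
    and invol_scaleC: "invol (a *\<^sub>C x) = cnj a *\<^sub>C invol x"
    and invol_mult: "invol (x * y) = invol y * invol x"

definition cstar_seminorm :: "('a::star_algebra \<Rightarrow> real) \<Rightarrow> bool" where
  "cstar_seminorm p \<longleftrightarrow>
     (\<forall>x y. p (x + y) \<le> p x + p y) \<and> (\<forall>c x. p (c *\<^sub>C x) = cmod c * p x) \<and>
     (\<forall>x y. p (x * y) \<le> p x * p y) \<and> (\<forall>x. p (invol x * x) = (p x)\<^sup>2)"

definition cont_cstar_seminorms :: "('a::{star_algebra,topological_space} \<Rightarrow> real) set" where
  "cont_cstar_seminorms = {p. cstar_seminorm p \<and> continuous_on UNIV p}"

text \<open>Completeness
is completeness of the uniform structure given by these seminorms, expressed with
Cauchy filters (equivalently Cauchy nets).\<close>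
definition pro_cstar_algebra :: "'a::{star_algebra,t2_space} itself \<Rightarrow> bool" where
  "pro_cstar_algebra (_ :: 'a itself) \<longleftrightarrow>
     continuous_on UNIV (\<lambda>z::'a \<times> 'a. fst z + snd z) \<and>
     continuous_on UNIV (\<lambda>z::complex \<times> 'a. fst z *\<^sub>C snd z) \<and>
     continuous_on UNIV (\<lambda>z::'a \<times> 'a. fst z * snd z) \<and>
     continuous_on UNIV (invol :: 'a \<Rightarrow> 'a) \<and>
     (\<forall>U::'a set. open U \<longleftrightarrow>
       (\<forall>x\<in>U. \<exists>P e. finite P \<and> P \<subseteq> cont_cstar_seminorms \<and> 0 < e \<and>
                  {y. \<forall>p\<in>P. p (y - x) < e} \<subseteq> U)) \<and>
     (\<forall>F :: 'a filter. F \<noteq> bot \<longrightarrow>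
       (\<forall>p\<in>cont_cstar_seminorms. \<forall>e>0. \<forall>\<^sub>F z in F \<times>\<^sub>F F. p (fst z - snd z) < e) \<longrightarrow>
       (\<exists>l. F \<le> nhds l))"

definition op_continuous :: "('a::topological_space \<Rightarrow> 'k::complex_inner \<Rightarrow> 'k) \<Rightarrow> bool" where
  "op_continuous \<Phi> \<longleftrightarrow>
     (\<forall>a0. \<forall>e>0. \<exists>U. open U \<and> a0 \<in> U \<and> (\<forall>a\<in>U. onorm (\<lambda>x. \<Phi> a x - \<Phi> a0 x) < e))"

definition cont_lin_map :: "('a::{star_algebra,t2_space} \<Rightarrow> 'k::chilbert_space \<Rightarrow> 'k) \<Rightarrow> bool" where
  "cont_lin_map \<Phi> \<longleftrightarrow>
     (\<forall>a. bounded_clinear (\<Phi> a)) \<and>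
     (\<forall>a b. \<Phi> (a + b) = (\<lambda>x. \<Phi> a x + \<Phi> b x)) \<and>
     (\<forall>c a. \<Phi> (c *\<^sub>C a) = (\<lambda>x. c *\<^sub>C \<Phi> a x)) \<and>
     op_continuous \<Phi>"

definition representation :: "('a::{star_algebra,t2_space} \<Rightarrow> 'k::chilbert_space \<Rightarrow> 'k) \<Rightarrow> bool" where
  "representation \<Phi> \<longleftrightarrow>
     cont_lin_map \<Phi> \<and>
     (\<forall>a b. \<Phi> (a * b) = \<Phi> a \<circ> \<Phi> b) \<and>
     (\<forall>a. \<Phi> (invol a) = cadjoint (\<Phi> a))"

text \<open>A matrix [rho i j], i,j in {1..n}, of continuous linear maps A \<rightarrow> L(H) is
completely n-positive if [a_ij] \<mapsto> [rho_ij(a_ij)] is completely positive, i.e. for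
every m its m-th amplification M_m(M_n(A)) \<rightarrow> M_m(M_n(L(H))) maps positive elements
(those of the form b* b) to positive operators on H^(mn). Entries of M_m(M_n(A))
are indexed by pairs (s,i), s in {1..m} (block), i in {1..n} (inside the block).\<close>
definition completely_n_positive ::
  "nat \<Rightarrow> (nat \<Rightarrow> nat \<Rightarrow> 'a::{star_algebra,t2_space} \<Rightarrow> 'h::chilbert_space \<Rightarrow> 'h) \<Rightarrow> bool" where
  "completely_n_positive n \<rho> \<longleftrightarrow>
     (\<forall>i\<in>{1..n}. \<forall>j\<in>{1..n}. cont_lin_map (\<rho> i j)) \<and>
     (\<forall>m::nat. \<forall>(b :: nat \<times> nat \<Rightarrow> nat \<times> nat \<Rightarrow> 'a) (\<xi> :: nat \<times> nat \<Rightarrow> 'h).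
        0 \<le> (\<Sum>p\<in>{1..m}\<times>{1..n}. \<Sum>q\<in>{1..m}\<times>{1..n}.
               cinner (\<xi> p)
                 (\<rho> (snd p) (snd q) (\<Sum>r\<in>{1..m}\<times>{1..n}. invol (b r p) * b r q) (\<xi> q))))"

definition cnp_le ::
  "nat \<Rightarrow> (nat \<Rightarrow> nat \<Rightarrow> 'a::{star_algebra,t2_space} \<Rightarrow> 'h::chilbert_space \<Rightarrow> 'h) \<Rightarrow>
   (nat \<Rightarrow> nat \<Rightarrow> 'a \<Rightarrow> 'h \<Rightarrow> 'h) \<Rightarrow> bool" where
  "cnp_le n \<theta> \<rho> \<longleftrightarrow> completely_n_positive n (\<lambda>i j a x. \<rho> i j a x - \<theta> i j a x)"

definition stinespring_rep ::
  "nat \<Rightarrow> (nat \<Rightarrow> nat \<Rightarrow> 'a::{star_algebra,t2_space} \<Rightarrow> 'h::chilbert_space \<Rightarrow> 'h) \<Rightarrow>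
   ('a \<Rightarrow> 'k::chilbert_space \<Rightarrow> 'k) \<Rightarrow> (nat \<Rightarrow> 'h \<Rightarrow> 'k) \<Rightarrow> bool" where
  "stinespring_rep n \<rho> \<Phi> V \<longleftrightarrow>
     representation \<Phi> \<and>
     (\<forall>i\<in>{1..n}. bounded_clinear (V i)) \<and>
     (\<forall>i\<in>{1..n}. \<forall>j\<in>{1..n}. \<forall>a. \<rho> i j a = cadjoint (V i) \<circ> \<Phi> a \<circ> V j) \<and>
     closure (cspan {\<Phi> a (V i \<xi>) | a i \<xi>. i \<in> {1..n}}) = UNIV"

end

(* Since \<theta> \<le> \<rho>, the Gram form (p, q) \<mapsto> <\<xi>_p, \<rho>_{i_p i_q}(a_p* a_q) \<xi>_q> of \<rho> dominates
   that of \<theta>. For x = \<Sum>_p \<Phi>\<rho>(a_p) V\<rho>_{i_p} \<xi>_p this form computes \<parallel>x\<parallel>\<^sup>2, so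
   x \<mapsto> \<Sum>_p \<Phi>\<theta>(a_p) V\<theta>_{i_p} \<xi>_p is a well-defined contraction on a dense subspace of H\<rho>.
   Its continuous extension W intertwines \<Phi>\<rho> and \<Phi>\<theta> because that subspace is
   \<Phi>\<rho>-invariant, and W V\<rho>_i = V\<theta>_i because \<Phi>\<theta> is nondegenerate. *)

theory Submission
  imports Defs
begin

interpretation complex_vector: vector_space "scaleC :: complex \<Rightarrow> 'a::complex_vector \<Rightarrow> 'a"
  by unfold_locales (simp_all add: scaleC_add_right scaleC_add_left scaleC_scaleC scaleC_one)

lemma scaleC_minus_one: "(-1) *\<^sub>C (x::'a::complex_vector) = - x"
  by (simp add: complex_vector.scale_minus_left scaleC_one)

lemma cinner_add_left: "cinner (x + y) (z::'a::complex_inner) = cinner x z + cinner y z"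
  by (metis cinner_add_right cinner_commute complex_cnj_add)

lemma cinner_scaleC_left: "cinner (c *\<^sub>C x) (y::'a::complex_inner) = cnj c * cinner x y"
  by (metis cinner_commute cinner_scaleC_right complex_cnj_mult)

lemma cinner_self: "cinner x x = complex_of_real ((norm (x::'a::complex_inner))\<^sup>2)"
proof -
  have "Im (cinner x x) = 0" "0 \<le> Re (cinner x x)"
    using cinner_ge_zero[of x] by (auto simp: less_eq_complex_def)
  then show ?thesis by (simp add: norm_eq_sqrt_cinner complex_eq_iff)
qed

lemma norm_squared_eq_Re_cinner: "(norm (x::'a::complex_inner))\<^sup>2 = Re (cinner x x)"
  by (simp add: cinner_self)

lemma norm_scaleC: "norm (c *\<^sub>C (x::'a::complex_inner)) = cmod c * norm x"
proof -
  have "(norm (c *\<^sub>C x))\<^sup>2 = Re (c * cnj c * cinner x x)"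
    by (simp only: norm_squared_eq_Re_cinner cinner_scaleC_left cinner_scaleC_right mult.assoc)
  also have "\<dots> = (cmod c * norm x)\<^sup>2"
    by (simp only: complex_norm_square [symmetric] cinner_self Re_complex_of_real
        of_real_mult [symmetric] power_mult_distrib)
  finally show ?thesis
    by (simp add: power2_eq_iff_nonneg)
qed

lemma norm_add_scaleC_squared:
  "(norm (x + c *\<^sub>C y))\<^sup>2 =
     (norm x)\<^sup>2 + 2 * Re (c * cinner x y) + (cmod c)\<^sup>2 * (norm (y::'a::complex_inner))\<^sup>2"
proof -
  have "(norm (x + c *\<^sub>C y))\<^sup>2 = Re (cinner (x + c *\<^sub>C y) (x + c *\<^sub>C y))"
    by (rule norm_squared_eq_Re_cinner)
  also have "cinner (x + c *\<^sub>C y) (x + c *\<^sub>C y) =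
      cinner x x + (c * cinner x y + cnj (c * cinner x y)) + c * cnj c * cinner y y"
    by (simp add: cinner_add_left cinner_add_right cinner_scaleC_left cinner_scaleC_right
        cinner_commute [of y x] algebra_simps)
  also have "\<dots> = complex_of_real ((norm x)\<^sup>2) + (c * cinner x y + cnj (c * cinner x y))
      + complex_of_real ((cmod c)\<^sup>2 * (norm y)\<^sup>2)"
    by (simp only: cinner_self complex_norm_square [symmetric] of_real_mult)
  finally show ?thesis
    by (simp only: Re_complex_of_real plus_complex.sel complex_add_cnj mult_2)
qed

lemma norm_add_scaleC_projection_squared:
  fixes x y :: "'a::complex_inner"
  assumes "y \<noteq> 0"
  shows "(norm (x + (- cinner y x / complex_of_real ((norm y)\<^sup>2)) *\<^sub>C y))\<^sup>2 =
           (norm x)\<^sup>2 - (cmod (cinner x y))\<^sup>2 / (norm y)\<^sup>2"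
proof -
  define w where "w = cinner x y"
  define N where "N = (norm y)\<^sup>2"
  have "N > 0"
    using assms by (simp add: N_def)
  have "- cinner y x / complex_of_real N * w = - (w * cnj w) / complex_of_real N"
    by (simp add: w_def cinner_commute [of y x])
  also have "\<dots> = complex_of_real (- (cmod w)\<^sup>2 / N)"
    by (simp only: complex_norm_square [symmetric] of_real_minus of_real_divide)
  finally have "Re (- cinner y x / complex_of_real N * w) = - (cmod w)\<^sup>2 / N"
    by (simp only: Re_complex_of_real)
  moreover have "cmod (- cinner y x / complex_of_real N) = cmod w / N"
    using \<open>N > 0\<close> by (simp add: w_def cinner_commute [of y x] norm_divide)
  then have "(cmod (- cinner y x / complex_of_real N))\<^sup>2 * N = (cmod w)\<^sup>2 / N"
    using \<open>N > 0\<close> by (simp add: power_divide power2_eq_square)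
  ultimately show ?thesis
    unfolding norm_add_scaleC_squared w_def N_def by linarith
qed

lemma cinner_cauchy_schwarz: "cmod (cinner x y) \<le> norm x * norm (y::'a::complex_inner)"
proof (cases "y = 0")
  case True
  then show ?thesis
    using cinner_scaleC_right [of x 0 0] by simp
next
  case False
  then have "(cmod (cinner x y))\<^sup>2 / (norm y)\<^sup>2 \<le> (norm x)\<^sup>2"
    using norm_add_scaleC_projection_squared [of y x] by (metis diff_ge_0_iff_ge zero_le_power2)
  then have "(cmod (cinner x y))\<^sup>2 \<le> (norm x * norm y)\<^sup>2"
    using False by (simp add: pos_divide_le_eq power_mult_distrib)
  then show ?thesis
    by (rule power2_le_imp_le) simp
qed

interpretation cinner: bounded_bilinear "cinner :: 'a::complex_inner \<Rightarrow> 'a \<Rightarrow> complex"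
proof
  fix x y z :: 'a and r :: real
  show "cinner (x + y) z = cinner x z + cinner y z"
    by (rule cinner_add_left)
  show "cinner x (y + z) = cinner x y + cinner x z"
    by (rule cinner_add_right)
  show "cinner (r *\<^sub>R x) y = r *\<^sub>R cinner x y"
    by (simp add: scaleR_scaleC cinner_scaleC_left scaleR_conv_of_real)
  show "cinner x (r *\<^sub>R y) = r *\<^sub>R cinner x y"
    by (simp add: scaleR_scaleC cinner_scaleC_right scaleR_conv_of_real)
  show "\<exists>K. \<forall>x y :: 'a. cmod (cinner x y) \<le> norm x * norm y * K"
    using cinner_cauchy_schwarz by (metis mult.right_neutral)
qed

lemma bounded_clinear_imp_bounded_linear: "bounded_clinear f \<Longrightarrow> bounded_linear f"
  unfolding bounded_clinear_def by (auto intro: bounded_linear_intro simp: scaleR_scaleC)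

lemma bounded_clinear_imp_linear: "bounded_clinear f \<Longrightarrow> linear f"
  by (rule bounded_linear.linear [OF bounded_clinear_imp_bounded_linear])

lemma bounded_clinear_scaleC: "bounded_clinear (\<lambda>x::'a::complex_inner. c *\<^sub>C x)"
  unfolding bounded_clinear_def
  by (auto simp: scaleC_add_right scaleC_scaleC mult.commute norm_scaleC intro!: exI [of _ "cmod c"])

lemma continuous_on_scaleC: "continuous_on S (\<lambda>x::'a::complex_inner. c *\<^sub>C x)"
  by (intro linear_continuous_on bounded_clinear_imp_bounded_linear bounded_clinear_scaleC)

lemma parallelogram_law:
  "(norm (x + y))\<^sup>2 + (norm (x - y))\<^sup>2 = 2 * (norm x)\<^sup>2 + 2 * (norm (y::'a::complex_inner))\<^sup>2"
  using norm_add_scaleC_squared [of x 1 y] norm_add_scaleC_squared [of x "-1" y]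
  by (simp add: scaleC_one scaleC_minus_one)

lemma convex_minimizing_sequence_Cauchy:
  fixes X :: "nat \<Rightarrow> 'a::complex_inner"
  assumes "convex M" and XM: "\<And>k. X k \<in> M" and X_lim: "(\<lambda>k. norm (X k)) \<longlonglongrightarrow> Inf (norm ` M)"
  shows "Cauchy X"
proof (rule metric_CauchyI)
  fix e :: real
  assume "0 < e"
  define d where "d = Inf (norm ` M)"
  have "0 \<le> d"
    unfolding d_def using XM by (intro cInf_greatest) auto
  have midpoint: "4 * d\<^sup>2 \<le> (norm (x + y))\<^sup>2" if "x \<in> M" "y \<in> M" for x y
  proof -
    have "(1/2) *\<^sub>R x + (1/2) *\<^sub>R y \<in> M"
      using \<open>convex M\<close> that by (rule convexD) auto
    then have "d \<le> norm ((1/2) *\<^sub>R (x + y))"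
      unfolding d_def by (intro cInf_lower bdd_belowI [of _ 0]) (auto simp: scaleR_right_distrib)
    then have "(2 * d)\<^sup>2 \<le> (norm (x + y))\<^sup>2"
      using \<open>0 \<le> d\<close> by (intro power_mono) auto
    then show ?thesis
      by (simp add: power_mult_distrib)
  qed
  have "(\<lambda>k. (norm (X k))\<^sup>2) \<longlonglongrightarrow> d\<^sup>2"
    unfolding d_def by (intro tendsto_intros X_lim)
  moreover have "d\<^sup>2 < d\<^sup>2 + e\<^sup>2 / 4"
    using \<open>0 < e\<close> by simp
  ultimately have "\<forall>\<^sub>F k in sequentially. (norm (X k))\<^sup>2 < d\<^sup>2 + e\<^sup>2 / 4"
    by (rule order_tendstoD(2))
  then obtain N where N: "\<And>k. k \<ge> N \<Longrightarrow> (norm (X k))\<^sup>2 < d\<^sup>2 + e\<^sup>2 / 4"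
    unfolding eventually_sequentially by blast
  have "dist (X k) (X l) < e" if "k \<ge> N" "l \<ge> N" for k l
  proof -
    have "(norm (X k - X l))\<^sup>2 < e\<^sup>2"
      using parallelogram_law [of "X k" "X l"] midpoint [OF XM XM, of k l] N [OF that(1)] N [OF that(2)]
      by linarith
    then show ?thesis
      using \<open>0 < e\<close> by (simp add: dist_norm power_less_imp_less_base)
  qed
  then show "\<exists>N. \<forall>k\<ge>N. \<forall>l\<ge>N. dist (X k) (X l) < e"
    by blast
qed

lemma closed_convex_min_norm_exists:
  fixes M :: "'a::{complex_inner,complete_space} set"
  assumes "closed M" and "convex M" and "M \<noteq> {}"
  shows "\<exists>z\<in>M. \<forall>w\<in>M. norm z \<le> norm w"
proof -
  have bdd: "bdd_below (norm ` M)"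
    by (rule bdd_belowI [of _ 0]) auto
  have "Inf (norm ` M) \<in> closure (norm ` M)"
    using assms(3) bdd by (intro closure_contains_Inf) auto
  then obtain Y where Y: "\<And>k. Y k \<in> norm ` M" and Y_lim: "Y \<longlonglongrightarrow> Inf (norm ` M)"
    by (auto simp: closure_sequential)
  have "\<forall>k. \<exists>x. x \<in> M \<and> norm x = Y k"
    using Y by (metis imageE)
  then obtain X where XM: "\<And>k. X k \<in> M" and "\<And>k. norm (X k) = Y k"
    unfolding choice_iff by blast
  then have X_lim: "(\<lambda>k. norm (X k)) \<longlonglongrightarrow> Inf (norm ` M)"
    using Y_lim by simp
  then have "Cauchy X"
    by (rule convex_minimizing_sequence_Cauchy [OF assms(2) XM])
  then obtain z where X_z: "X \<longlonglongrightarrow> z"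
    unfolding Cauchy_convergent_iff convergent_def by blast
  have "z \<in> M"
    using assms(1) XM X_z by (rule closed_sequentially)
  moreover have "norm z \<le> norm w" if "w \<in> M" for w
  proof -
    have "norm z = Inf (norm ` M)"
      using X_z X_lim by (metis LIMSEQ_unique tendsto_norm)
    then show ?thesis
      using bdd that by (simp add: cInf_lower)
  qed
  ultimately show ?thesis
    by blast
qed

lemma cinner_eq_0_if_norm_minimal:
  fixes z v :: "'a::complex_inner"
  assumes "\<And>t. norm z \<le> norm (z + t *\<^sub>C v)"
  shows "cinner z v = 0"
proof (cases "v = 0")
  case True
  then show ?thesis
    using cinner.zero_right by simp
next
  case False
  let ?t = "- cinner v z / complex_of_real ((norm v)\<^sup>2)"
  from assms [of ?t] have "(norm z)\<^sup>2 \<le> (norm (z + ?t *\<^sub>C v))\<^sup>2"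
    by (rule power_mono) simp
  then have "(cmod (cinner z v))\<^sup>2 / (norm v)\<^sup>2 \<le> 0"
    unfolding norm_add_scaleC_projection_squared [OF False] by simp
  then show ?thesis
    using False by (simp add: divide_le_0_iff)
qed

(* Needed because cadjoint is defined by choice: only the Riesz representation guarantees
   that the chosen operator is an adjoint. *)
lemma riesz_representation:
  fixes f :: "'a::chilbert_space \<Rightarrow> complex"
  assumes add: "\<And>x y. f (x + y) = f x + f y"
    and scale: "\<And>c x. f (c *\<^sub>C x) = c * f x"
    and cont: "continuous_on UNIV f"
  shows "\<exists>s. \<forall>x. f x = cinner s x"
proof (cases "\<forall>x. f x = 0")
  case True
  then show ?thesis
    by (intro exI [of _ 0]) (simp add: cinner.zero_left)
next
  case False
  then obtain x0 where "f x0 \<noteq> 0"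
    by blast
  define M where "M = {x. f x = 1}"
  have "(1 / f x0) *\<^sub>C x0 \<in> M"
    using \<open>f x0 \<noteq> 0\<close> by (simp add: M_def scale)
  then have "M \<noteq> {}"
    by blast
  have "closed M"
    unfolding M_def using cont by (intro closed_Collect_eq) auto
  have "convex M"
  proof (rule convexI)
    fix x y and u v :: real
    assume "x \<in> M" "y \<in> M" "u + v = 1"
    from \<open>x \<in> M\<close> \<open>y \<in> M\<close> have "f (u *\<^sub>R x + v *\<^sub>R y) = complex_of_real (u + v)"
      by (simp only: M_def mem_Collect_eq add scaleR_scaleC scale of_real_add mult_1_right)
    then show "u *\<^sub>R x + v *\<^sub>R y \<in> M"
      using \<open>u + v = 1\<close> by (simp add: M_def)
  qed
  obtain z where "z \<in> M" and z_min: "\<And>w. w \<in> M \<Longrightarrow> norm z \<le> norm w"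
    using closed_convex_min_norm_exists [OF \<open>closed M\<close> \<open>convex M\<close> \<open>M \<noteq> {}\<close>] by blast
  then have "f z = 1"
    by (simp add: M_def)
  have z_orth: "cinner z v = 0" if "f v = 0" for v
    using \<open>f z = 1\<close> that by (intro cinner_eq_0_if_norm_minimal z_min) (simp add: M_def add scale)
  have "z \<noteq> 0"
    using \<open>f z = 1\<close> scale [of 0 0] by auto
  have "f x = cinner ((1 / (norm z)\<^sup>2) *\<^sub>R z) x" for x
  proof -
    have "f (x - f x *\<^sub>C z) = 0"
      using add [of "x - f x *\<^sub>C z" "f x *\<^sub>C z"] by (simp add: scale \<open>f z = 1\<close>)
    then have "cinner z (x - f x *\<^sub>C z) = 0"
      by (rule z_orth)
    then have "cinner z x = f x * complex_of_real ((norm z)\<^sup>2)"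
      by (simp add: cinner.diff_right cinner_scaleC_right cinner_self)
    then show ?thesis
      using \<open>z \<noteq> 0\<close> by (simp add: cinner.scaleR_left scaleR_conv_of_real)
  qed
  then show ?thesis
    by blast
qed

lemma cinner_cadjoint:
  fixes T :: "'a::chilbert_space \<Rightarrow> 'b::complex_inner"
  assumes "bounded_clinear T"
  shows "cinner x (cadjoint T y) = cinner (T x) y"
proof -
  have "\<forall>y. \<exists>s. \<forall>x. cinner y (T x) = cinner s x"
  proof (intro allI riesz_representation)
    fix y
    show "cinner y (T (a + b)) = cinner y (T a) + cinner y (T b)" for a b
      using assms by (simp add: bounded_clinear_def cinner.add_right)
    show "cinner y (T (c *\<^sub>C a)) = c * cinner y (T a)" for c a
      using assms by (simp add: bounded_clinear_def cinner_scaleC_right)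
    show "continuous_on UNIV (\<lambda>x. cinner y (T x))"
      using assms by (intro linear_continuous_on bounded_linear_compose [OF cinner.bounded_linear_right]
          bounded_clinear_imp_bounded_linear)
  qed
  then obtain S where S: "\<And>y x. cinner y (T x) = cinner (S y) x"
    unfolding choice_iff by blast
  have "cinner (cadjoint T y) x = cinner y (T x)"
    unfolding cadjoint_def by (rule someI2 [of _ S]) (simp_all add: S)
  then show ?thesis
    using cinner_commute [of x "cadjoint T y"] cinner_commute [of y "T x"] by simp
qed

lemma dense_closed_Collect:
  assumes "closure D = UNIV" and "closed {x. P x}" and "\<And>x. x \<in> D \<Longrightarrow> P x"
  shows "P x"
  using closure_minimal [of D "{x. P x}"] assms by auto

lemma contraction_extends_from_dense_subspace:
  fixes f :: "'a::complex_inner \<Rightarrow> 'b::chilbert_space"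
  assumes dense: "closure D = UNIV"
    and D_add: "\<And>x y. x \<in> D \<Longrightarrow> y \<in> D \<Longrightarrow> x + y \<in> D"
    and D_scale: "\<And>c x. x \<in> D \<Longrightarrow> c *\<^sub>C x \<in> D"
    and f_add: "\<And>x y. x \<in> D \<Longrightarrow> y \<in> D \<Longrightarrow> f (x + y) = f x + f y"
    and f_scale: "\<And>c x. x \<in> D \<Longrightarrow> f (c *\<^sub>C x) = c *\<^sub>C f x"
    and f_norm: "\<And>x. x \<in> D \<Longrightarrow> norm (f x) \<le> norm x"
  shows "\<exists>g. bounded_clinear g \<and> onorm g \<le> 1 \<and> (\<forall>x\<in>D. g x = f x)"
proof -
  have f_lip: "lipschitz_on 1 D f"
  proof (rule lipschitz_onI)
    fix x y
    assume "x \<in> D" "y \<in> D"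
    then have "x - y \<in> D \<and> f (x - y) = f x - f y"
      using D_add D_scale f_add f_scale scaleC_minus_one [of y] scaleC_minus_one [of "f y"]
      by (metis diff_conv_add_uminus)
    then show "dist (f x) (f y) \<le> 1 * dist x y"
      using f_norm [of "x - y"] by (simp add: dist_norm)
  qed simp
  obtain g where g_lip: "lipschitz_on 1 UNIV g" and g_f: "\<And>x. x \<in> D \<Longrightarrow> g x = f x"
    using lipschitz_extend_closure [OF f_lip] unfolding dense by blast
  have g_cont: "continuous_on UNIV g"
    using g_lip by (rule lipschitz_on_continuous_on)
  have g_add_D: "g (x + y) = g x + g y" if "y \<in> D" for x y
    by (rule dense_closed_Collect [OF dense, where P = "\<lambda>x. g (x + y) = g x + g y"])
      (use that in \<open>auto simp: f_add D_add g_f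
        intro!: closed_Collect_eq continuous_on_compose2 [OF g_cont] continuous_intros\<close>)
  have g_add: "g (x + y) = g x + g y" for x y
    by (rule dense_closed_Collect [OF dense, where P = "\<lambda>y. g (x + y) = g x + g y"])
      (auto simp: g_add_D intro!: closed_Collect_eq continuous_on_compose2 [OF g_cont] continuous_intros)
  have g_scale: "g (c *\<^sub>C x) = c *\<^sub>C g x" for c x
    by (rule dense_closed_Collect [OF dense, where P = "\<lambda>x. g (c *\<^sub>C x) = c *\<^sub>C g x"])
      (auto simp: f_scale D_scale g_f intro!: closed_Collect_eq
        continuous_on_compose2 [OF g_cont] continuous_on_compose2 [OF continuous_on_scaleC] g_cont continuous_on_scaleC)
  have g_norm: "norm (g x) \<le> norm x" for x
    using lipschitz_onD [OF g_lip, of x 0] g_scale [of 0 0] by (simp add: dist_norm)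
  have "bounded_clinear g"
    unfolding bounded_clinear_def using g_add g_scale g_norm by (auto intro!: exI [of _ 1])
  moreover have "onorm g \<le> 1"
    using g_norm by (intro onorm_bound) auto
  ultimately show ?thesis
    using g_f by auto
qed

lemma invol_zero: "invol (0::'a::star_algebra) = 0"
  using invol_add [of "0::'a" 0] by simp

lemma cspan_subset:
  assumes "S \<subseteq> D" and "0 \<in> D"
    and "\<And>x y. x \<in> D \<Longrightarrow> y \<in> D \<Longrightarrow> x + y \<in> D"
    and "\<And>c x. x \<in> D \<Longrightarrow> c *\<^sub>C x \<in> D"
  shows "cspan S \<subseteq> D"
proof -
  have "(\<Sum>x\<in>F. c x *\<^sub>C x) \<in> D" if "finite F" "F \<subseteq> S" for F c
    using that by (induction F rule: finite_induct) (use assms in auto)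
  then show ?thesis
    unfolding cspan_def by blast
qed

(* Indexed by {1..m} \<times> {1..n} like the amplifications in completely_n_positive, so that
   the Gram form of such a vector is a term of that definition. *)
definition stinespring_vector ::
  "nat \<Rightarrow> ('a \<Rightarrow> 'k \<Rightarrow> 'k) \<Rightarrow> (nat \<Rightarrow> 'h \<Rightarrow> 'k) \<Rightarrow>
   nat \<Rightarrow> (nat \<times> nat \<Rightarrow> 'a) \<Rightarrow> (nat \<times> nat \<Rightarrow> 'h) \<Rightarrow> 'k::ab_group_add" where
  "stinespring_vector n \<Phi> V m a \<xi> = (\<Sum>p\<in>{1..m}\<times>{1..n}. \<Phi> (a p) (V (snd p) (\<xi> p)))"

definition append_blocks :: "nat \<Rightarrow> (nat \<times> nat \<Rightarrow> 'b) \<Rightarrow> (nat \<times> nat \<Rightarrow> 'b) \<Rightarrow> nat \<times> nat \<Rightarrow> 'b" where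
  "append_blocks m f g p = (if fst p \<le> m then f p else g (fst p - m, snd p))"

lemma stinespring_vector_add:
  "stinespring_vector n \<Phi> V m a \<xi> + stinespring_vector n \<Phi> V m' a' \<xi>' =
     stinespring_vector n \<Phi> V (m + m') (append_blocks m a a') (append_blocks m \<xi> \<xi>')"
proof -
  let ?F = "\<lambda>p. \<Phi> (append_blocks m a a' p) (V (snd p) (append_blocks m \<xi> \<xi>' p))"
  have blocks: "{1..m + m'} \<times> {1..n} = {1..m} \<times> {1..n} \<union> {m+1..m+m'} \<times> {1..n}"
    by auto
  have "(\<Sum>p\<in>{1..m} \<times> {1..n}. ?F p) = stinespring_vector n \<Phi> V m a \<xi>"
    unfolding stinespring_vector_def by (rule sum.cong) (auto simp: append_blocks_def)
  moreover have "(\<Sum>p\<in>{m+1..m+m'} \<times> {1..n}. ?F p) = stinespring_vector n \<Phi> V m' a' \<xi>'"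
    unfolding stinespring_vector_def
    by (rule sum.reindex_bij_witness [of _ "\<lambda>p. (fst p + m, snd p)" "\<lambda>p. (fst p - m, snd p)"])
      (auto simp: append_blocks_def)
  ultimately show ?thesis
    unfolding stinespring_vector_def blocks by (subst sum.union_disjoint) auto
qed

locale stinespring =
  fixes n :: nat
    and \<rho> :: "nat \<Rightarrow> nat \<Rightarrow> 'a::{star_algebra,t2_space} \<Rightarrow> 'h::chilbert_space \<Rightarrow> 'h"
    and \<Phi> :: "'a \<Rightarrow> 'k::chilbert_space \<Rightarrow> 'k"
    and V :: "nat \<Rightarrow> 'h \<Rightarrow> 'k"
  assumes stinespring_rep: "stinespring_rep n \<rho> \<Phi> V"
begin

lemma Phi_bounded_clinear: "bounded_clinear (\<Phi> a)"
  using stinespring_rep unfolding stinespring_rep_def representation_def cont_lin_map_def by blast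

lemma V_bounded_clinear: "i \<in> {1..n} \<Longrightarrow> bounded_clinear (V i)"
  using stinespring_rep unfolding stinespring_rep_def by blast

lemma Phi_mult: "\<Phi> (a * b) x = \<Phi> a (\<Phi> b x)"
  using stinespring_rep unfolding stinespring_rep_def representation_def by simp

lemma cinner_Phi: "cinner (\<Phi> a u) w = cinner u (\<Phi> (invol a) w)"
  using stinespring_rep cinner_cadjoint [OF Phi_bounded_clinear, of u a w]
  unfolding stinespring_rep_def representation_def by simp

lemma cinner_Phi_V:
  assumes "i \<in> {1..n}" and "j \<in> {1..n}"
  shows "cinner (\<Phi> a (V i \<xi>)) (\<Phi> b (V j \<eta>)) = cinner \<xi> (\<rho> i j (invol a * b) \<eta>)"
  using stinespring_rep assms cinner_cadjoint [OF V_bounded_clinear [OF assms(1)]]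
  unfolding stinespring_rep_def by (simp add: cinner_Phi Phi_mult)

lemma cinner_stinespring_vector_self:
  "cinner (stinespring_vector n \<Phi> V m a \<xi>) (stinespring_vector n \<Phi> V m a \<xi>) =
     (\<Sum>p\<in>{1..m}\<times>{1..n}. \<Sum>q\<in>{1..m}\<times>{1..n}.
        cinner (\<xi> p) (\<rho> (snd p) (snd q) (invol (a p) * a q) (\<xi> q)))"
  unfolding stinespring_vector_def cinner.sum_left
  unfolding cinner.sum_right
  by (intro sum.cong refl) (auto simp: cinner_Phi_V)

lemma scaleC_stinespring_vector:
  "c *\<^sub>C stinespring_vector n \<Phi> V m a \<xi> = stinespring_vector n \<Phi> V m a (\<lambda>p. c *\<^sub>C \<xi> p)"
  unfolding stinespring_vector_def complex_vector.scale_sum_right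
  using Phi_bounded_clinear V_bounded_clinear
  by (intro sum.cong refl) (auto simp: bounded_clinear_def)

lemma minus_stinespring_vector:
  "- stinespring_vector n \<Phi> V m a \<xi> = stinespring_vector n \<Phi> V m a (\<lambda>p. - \<xi> p)"
  using scaleC_stinespring_vector [of "-1"] by (simp add: scaleC_minus_one)

lemma diff_stinespring_vector:
  "stinespring_vector n \<Phi> V m a \<xi> - stinespring_vector n \<Phi> V m' a' \<xi>' =
     stinespring_vector n \<Phi> V (m + m') (append_blocks m a a') (append_blocks m \<xi> (\<lambda>p. - \<xi>' p))"
  by (simp add: minus_stinespring_vector stinespring_vector_add [symmetric])

lemma Phi_stinespring_vector:
  "\<Phi> b (stinespring_vector n \<Phi> V m a \<xi>) = stinespring_vector n \<Phi> V m (\<lambda>p. b * a p) \<xi>"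
  unfolding stinespring_vector_def linear_sum [OF bounded_clinear_imp_linear [OF Phi_bounded_clinear]]
  by (simp add: Phi_mult)

lemma Phi_V_eq_stinespring_vector:
  assumes "i \<in> {1..n}"
  shows "\<Phi> a (V i \<xi>) = stinespring_vector n \<Phi> V 1 (\<lambda>_. a) (\<lambda>p. if snd p = i then \<xi> else 0)"
proof -
  have "stinespring_vector n \<Phi> V 1 (\<lambda>_. a) (\<lambda>p. if snd p = i then \<xi> else 0) =
      (\<Sum>p\<in>{1..1}\<times>{1..n}. if p = (1::nat, i) then \<Phi> a (V i \<xi>) else 0)"
    unfolding stinespring_vector_def
    by (intro sum.cong refl) (auto simp: linear_0 [OF bounded_clinear_imp_linear [OF Phi_bounded_clinear]]
        linear_0 [OF bounded_clinear_imp_linear [OF V_bounded_clinear]])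
  also have "\<dots> = \<Phi> a (V i \<xi>)"
    using assms by (simp add: sum.delta')
  finally show ?thesis
    by simp
qed

lemma closure_stinespring_vectors: "closure {stinespring_vector n \<Phi> V m a \<xi> | m a \<xi>. True} = UNIV"
proof -
  let ?D = "{stinespring_vector n \<Phi> V m a \<xi> | m a \<xi>. True}"
  have "cspan {\<Phi> a (V i \<xi>) | a i \<xi>. i \<in> {1..n}} \<subseteq> ?D"
  proof (rule cspan_subset)
    show "{\<Phi> a (V i \<xi>) | a i \<xi>. i \<in> {1..n}} \<subseteq> ?D"
      using Phi_V_eq_stinespring_vector by blast
    show "0 \<in> ?D"
      by (auto simp: stinespring_vector_def intro!: exI [of _ 0])
    show "x + y \<in> ?D" if "x \<in> ?D" and "y \<in> ?D" for x y
      using that by (force simp: stinespring_vector_add)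
    show "c *\<^sub>C x \<in> ?D" if "x \<in> ?D" for c x
      using that by (force simp: scaleC_stinespring_vector)
  qed
  then show ?thesis
    using closure_mono stinespring_rep unfolding stinespring_rep_def by blast
qed

lemma Phi_nondegenerate:
  assumes "\<And>a. \<Phi> a z = 0"
  shows "z = 0"
proof -
  have "cinner x z = 0" for x
  proof (rule dense_closed_Collect [OF closure_stinespring_vectors, where P = "\<lambda>x. cinner x z = 0"])
    show "closed {x. cinner x z = 0}"
      by (intro closed_Collect_eq cinner.continuous_on continuous_intros)
    show "cinner x z = 0" if "x \<in> {stinespring_vector n \<Phi> V m a \<xi> | m a \<xi>. True}" for x
      using that assms unfolding stinespring_vector_def
      by (auto simp: cinner.sum_left cinner_Phi cinner.zero_right)
  qed
  then show ?thesis
    using cinner_self [of z] by simp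
qed

end

lemma completely_n_positive_gram_nonneg:
  fixes m :: nat
  assumes "completely_n_positive n \<sigma>"
  shows "0 \<le> (\<Sum>p\<in>{1..m}\<times>{1..n}. \<Sum>q\<in>{1..m}\<times>{1..n}.
               cinner (\<xi> p) (\<sigma> (snd p) (snd q) (invol (a p) * a q) (\<xi> q)))"
proof (cases "m = 0 \<or> n = 0")
  case True
  then show ?thesis
    by auto
next
  case False
  let ?P = "{1..m}\<times>{1..n}"
  \<comment> \<open>Only the first row of b is nonzero, so the entries of b* b are the a_p* a_q.\<close>
  define b where "b r p = (if r = (1::nat, 1::nat) then a p else 0)" for r p
  have gram_b: "invol (a p) * a q = (\<Sum>r\<in>?P. invol (b r p) * b r q)" for p q
  proof -
    have "(\<Sum>r\<in>?P. invol (b r p) * b r q) = (\<Sum>r\<in>?P. if r = (1, 1) then invol (a p) * a q else 0)"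
      by (rule sum.cong) (auto simp: b_def invol_zero)
    also have "\<dots> = invol (a p) * a q"
      using False by (simp add: sum.delta')
    finally show ?thesis
      by simp
  qed
  have "0 \<le> (\<Sum>p\<in>?P. \<Sum>q\<in>?P. cinner (\<xi> p) (\<sigma> (snd p) (snd q) (\<Sum>r\<in>?P. invol (b r p) * b r q) (\<xi> q)))"
    using assms unfolding completely_n_positive_def by blast
  then show ?thesis
    by (simp only: gram_b)
qed

lemma stinespring_vector_norm_le:
  assumes \<rho>: "stinespring_rep n \<rho> \<Phi>\<rho> V\<rho>" and \<theta>: "stinespring_rep n \<theta> \<Phi>\<theta> V\<theta>"
    and "cnp_le n \<theta> \<rho>"
  shows "norm (stinespring_vector n \<Phi>\<theta> V\<theta> m a \<xi>) \<le> norm (stinespring_vector n \<Phi>\<rho> V\<rho> m a \<xi>)"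
proof -
  interpret R: stinespring n \<rho> \<Phi>\<rho> V\<rho>
    by (rule stinespring.intro) (fact \<rho>)
  interpret T: stinespring n \<theta> \<Phi>\<theta> V\<theta>
    by (rule stinespring.intro) (fact \<theta>)
  let ?P = "{1..m}\<times>{1..n}"
  have "0 \<le> (\<Sum>p\<in>?P. \<Sum>q\<in>?P. cinner (\<xi> p)
      (\<rho> (snd p) (snd q) (invol (a p) * a q) (\<xi> q) - \<theta> (snd p) (snd q) (invol (a p) * a q) (\<xi> q)))"
    using completely_n_positive_gram_nonneg \<open>cnp_le n \<theta> \<rho>\<close> unfolding cnp_le_def by fast
  also have "\<dots> = cinner (stinespring_vector n \<Phi>\<rho> V\<rho> m a \<xi>) (stinespring_vector n \<Phi>\<rho> V\<rho> m a \<xi>)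
      - cinner (stinespring_vector n \<Phi>\<theta> V\<theta> m a \<xi>) (stinespring_vector n \<Phi>\<theta> V\<theta> m a \<xi>)"
    by (simp add: R.cinner_stinespring_vector_self T.cinner_stinespring_vector_self
        cinner.diff_right sum_subtractf)
  finally have "(norm (stinespring_vector n \<Phi>\<theta> V\<theta> m a \<xi>))\<^sup>2 \<le> (norm (stinespring_vector n \<Phi>\<rho> V\<rho> m a \<xi>))\<^sup>2"
    by (simp add: cinner_self less_eq_complex_def del: of_real_power)
  then show ?thesis
    by (rule power2_le_imp_le) simp
qed

lemma stinespring_vector_map_exists:
  assumes "stinespring_rep n \<rho> \<Phi>\<rho> V\<rho>" and "stinespring_rep n \<theta> \<Phi>\<theta> V\<theta>" and "cnp_le n \<theta> \<rho>"
  shows "\<exists>W0. \<forall>m a \<xi>. W0 (stinespring_vector n \<Phi>\<rho> V\<rho> m a \<xi>) = stinespring_vector n \<Phi>\<theta> V\<theta> m a \<xi>"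
proof -
  interpret R: stinespring n \<rho> \<Phi>\<rho> V\<rho>
    by (rule stinespring.intro) fact
  interpret T: stinespring n \<theta> \<Phi>\<theta> V\<theta>
    by (rule stinespring.intro) fact
  let ?R = "stinespring_vector n \<Phi>\<rho> V\<rho>" and ?T = "stinespring_vector n \<Phi>\<theta> V\<theta>"
  have well_defined: "?T m a \<xi> = ?T m' a' \<xi>'" if "?R m a \<xi> = ?R m' a' \<xi>'" for m a \<xi> m' a' \<xi>'
  proof -
    have "norm (?T m a \<xi> - ?T m' a' \<xi>') \<le> norm (?R m a \<xi> - ?R m' a' \<xi>')"
      by (simp only: R.diff_stinespring_vector T.diff_stinespring_vector stinespring_vector_norm_le [OF assms])
    then show ?thesis
      using that by simp
  qed
  define W0 where "W0 x = (SOME y. \<exists>m a \<xi>. x = ?R m a \<xi> \<and> y = ?T m a \<xi>)" for x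
  have "W0 (?R m a \<xi>) = ?T m a \<xi>" for m a \<xi>
  proof -
    have "\<exists>m' a' \<xi>'. ?R m a \<xi> = ?R m' a' \<xi>' \<and> W0 (?R m a \<xi>) = ?T m' a' \<xi>'"
      unfolding W0_def by (rule someI_ex) blast
    then show ?thesis
      using well_defined by metis
  qed
  then show ?thesis
    by blast
qed

lemma stinespring_dominated_contraction:
  assumes \<rho>: "stinespring_rep n \<rho> \<Phi>\<rho> V\<rho>" and \<theta>: "stinespring_rep n \<theta> \<Phi>\<theta> V\<theta>"
    and "cnp_le n \<theta> \<rho>"
  shows "\<exists>W. bounded_clinear W \<and> onorm W \<le> 1 \<and>
           (\<forall>m a \<xi>. W (stinespring_vector n \<Phi>\<rho> V\<rho> m a \<xi>) = stinespring_vector n \<Phi>\<theta> V\<theta> m a \<xi>)"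
proof -
  interpret R: stinespring n \<rho> \<Phi>\<rho> V\<rho>
    by (rule stinespring.intro) (fact \<rho>)
  interpret T: stinespring n \<theta> \<Phi>\<theta> V\<theta>
    by (rule stinespring.intro) (fact \<theta>)
  let ?R = "stinespring_vector n \<Phi>\<rho> V\<rho>" and ?T = "stinespring_vector n \<Phi>\<theta> V\<theta>"
  let ?D = "{?R m a \<xi> | m a \<xi>. True}"
  obtain W0 where W0: "\<And>m a \<xi>. W0 (?R m a \<xi>) = ?T m a \<xi>"
    using stinespring_vector_map_exists [OF assms] by blast
  have "\<exists>W. bounded_clinear W \<and> onorm W \<le> 1 \<and> (\<forall>x\<in>?D. W x = W0 x)"
  proof (rule contraction_extends_from_dense_subspace)
    show "closure ?D = UNIV"
      by (rule R.closure_stinespring_vectors)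
    show "x + y \<in> ?D" if "x \<in> ?D" and "y \<in> ?D" for x y
      using that by (force simp: stinespring_vector_add)
    show "W0 (x + y) = W0 x + W0 y" if "x \<in> ?D" and "y \<in> ?D" for x y
      using that by (auto simp: W0 stinespring_vector_add)
    show "c *\<^sub>C x \<in> ?D" if "x \<in> ?D" for c x
      using that by (force simp: R.scaleC_stinespring_vector)
    show "W0 (c *\<^sub>C x) = c *\<^sub>C W0 x" if "x \<in> ?D" for c x
      using that by (auto simp: W0 R.scaleC_stinespring_vector T.scaleC_stinespring_vector)
    show "norm (W0 x) \<le> norm x" if "x \<in> ?D" for x
      using that stinespring_vector_norm_le [OF assms] by (auto simp: W0)
  qed
  then obtain W where "bounded_clinear W" "onorm W \<le> 1" and W_W0: "\<And>x. x \<in> ?D \<Longrightarrow> W x = W0 x"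
    by blast
  moreover have "W (?R m a \<xi>) = ?T m a \<xi>" for m a \<xi>
    by (subst W_W0) (auto simp: W0)
  ultimately show ?thesis
    by blast
qed

theorem lemma3p4:
  fixes n :: nat
    and \<rho> \<theta> :: "nat \<Rightarrow> nat \<Rightarrow> 'a::{star_algebra,t2_space} \<Rightarrow> 'h::chilbert_space \<Rightarrow> 'h"
    and \<Phi>\<rho> :: "'a \<Rightarrow> 'r::chilbert_space \<Rightarrow> 'r" and V\<rho> :: "nat \<Rightarrow> 'h \<Rightarrow> 'r"
    and \<Phi>\<theta> :: "'a \<Rightarrow> 't::chilbert_space \<Rightarrow> 't" and V\<theta> :: "nat \<Rightarrow> 'h \<Rightarrow> 't"
  assumes "pro_cstar_algebra TYPE('a)"
    and "1 \<le> n"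
    and "completely_n_positive n \<rho>"
    and "completely_n_positive n \<theta>"
    and "stinespring_rep n \<rho> \<Phi>\<rho> V\<rho>"
    and "stinespring_rep n \<theta> \<Phi>\<theta> V\<theta>"
    and "cnp_le n \<theta> \<rho>"
  shows "\<exists>W :: 'r \<Rightarrow> 't. bounded_clinear W \<and> onorm W \<le> 1 \<and>
           (\<forall>i\<in>{1..n}. W \<circ> V\<rho> i = V\<theta> i) \<and>
           (\<forall>a. W \<circ> \<Phi>\<rho> a = \<Phi>\<theta> a \<circ> W)"
proof -
  interpret R: stinespring n \<rho> \<Phi>\<rho> V\<rho>
    by (rule stinespring.intro) fact
  interpret T: stinespring n \<theta> \<Phi>\<theta> V\<theta>
    by (rule stinespring.intro) fact
  obtain W where W: "bounded_clinear W" "onorm W \<le> 1"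
    and W_vector: "\<And>m a \<xi>. W (stinespring_vector n \<Phi>\<rho> V\<rho> m a \<xi>) = stinespring_vector n \<Phi>\<theta> V\<theta> m a \<xi>"
    using stinespring_dominated_contraction [OF assms(5-7)] by blast
  have W_Phi: "W (\<Phi>\<rho> a x) = \<Phi>\<theta> a (W x)" for a x
  proof (rule dense_closed_Collect [OF R.closure_stinespring_vectors, where P = "\<lambda>x. W (\<Phi>\<rho> a x) = \<Phi>\<theta> a (W x)"])
    have lin: "bounded_linear W" "bounded_linear (\<Phi>\<rho> a)" "bounded_linear (\<Phi>\<theta> a)"
      using W(1) R.Phi_bounded_clinear T.Phi_bounded_clinear by (auto intro: bounded_clinear_imp_bounded_linear)
    show "closed {x. W (\<Phi>\<rho> a x) = \<Phi>\<theta> a (W x)}"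
      by (intro closed_Collect_eq linear_continuous_on bounded_linear_compose [OF lin(1,2)]
          bounded_linear_compose [OF lin(3,1)])
  qed (auto simp: W_vector R.Phi_stinespring_vector T.Phi_stinespring_vector)
  have W_V: "W (V\<rho> i \<xi>) = V\<theta> i \<xi>" if "i \<in> {1..n}" for i \<xi>
  proof (rule right_minus_eq [THEN iffD1, OF T.Phi_nondegenerate])
    fix a
    have "\<Phi>\<theta> a (W (V\<rho> i \<xi>)) = \<Phi>\<theta> a (V\<theta> i \<xi>)"
      by (simp only: W_Phi [symmetric] R.Phi_V_eq_stinespring_vector [OF that] W_vector
          T.Phi_V_eq_stinespring_vector [OF that])
    then show "\<Phi>\<theta> a (W (V\<rho> i \<xi>) - V\<theta> i \<xi>) = 0"
      by (simp add: linear_diff [OF bounded_clinear_imp_linear [OF T.Phi_bounded_clinear]])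
  qed
  show ?thesis
    using W W_Phi W_V by (intro exI [of _ W]) (simp add: fun_eq_iff)
qed

end
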